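(* Let $(S,\mathcal C)$ be a connectoid and $N,N'$ necklaces of $(S,\mathcal C)$. Then $N$ and $N'$ are equivalent if and only if there is an infinite family $(C_n)_{n\in\mathbb N}$ of pairwise disjoint finite connected sets such that each $C_n$ contains an element of $N$ and an element of $N'$.
   Context: A connectoid is given by a set $S$ and a set $\mathcal F$ of finite subsets of $S$ such that (i) $F\cup F'\in\mathcal F$ whenever $F,F'\in\mathcal F$ and $F\cap F'\neq\emptyset$, and (ii) $\emptyset\in\mathcal F$ and $\{s\}\in\mathcal F$ for every $s\in S$. A set $C\subseteq S$ is connected if for all $x,y\in C$ there is $F\in\mathcal F$ with $F\subseteq C$ and $x,y\in F$; $\mathcal C$ is the set of connected sets. For $S'\subseteq S$, a component of $S'$ is a maximal connected subset of $S'$, and $\mathcal K(S')$ is the set of components of $S'$. A necklace is a connected set $N$ for which there is a family $(H_n)_{n\in\mathbb N}$ of finite connected sets with $N=\bigcup_n H_n$ and $H_i\cap H_j\neq\emptyset$ iff $|i-j|\le 1$. For a necklace $N$ and finite $X\subseteq S$, the $X$-tail of $N$ is the unique element of $\mathcal K(N\setminus X)$ containing all but finitely many elements of $N$. Two necklaces are equivalent if for every finite $X\subseteq S$ their $X$-tails are contained in the same element of $\mathcal K(S\setminus X)$. *)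

theory Defs
  imports Main
begin

definition connectoid :: "'a set \<Rightarrow> 'a set set \<Rightarrow> bool" where
  "connectoid S \<F> \<longleftrightarrow>
     (\<forall>F\<in>\<F>. finite F \<and> F \<subseteq> S) \<and>
     (\<forall>F\<in>\<F>. \<forall>F'\<in>\<F>. F \<inter> F' \<noteq> {} \<longrightarrow> F \<union> F' \<in> \<F>) \<and>
     {} \<in> \<F> \<and> (\<forall>s\<in>S. {s} \<in> \<F>)"

definition cn_connected :: "'a set set \<Rightarrow> 'a set \<Rightarrow> bool" where
  "cn_connected \<F> C \<longleftrightarrow> (\<forall>x\<in>C. \<forall>y\<in>C. \<exists>F\<in>\<F>. F \<subseteq> C \<and> x \<in> F \<and> y \<in> F)"

definition cn_components :: "'a set set \<Rightarrow> 'a set \<Rightarrow> 'a set set" where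
  "cn_components \<F> S' = {C. C \<subseteq> S' \<and> cn_connected \<F> C \<and>
      (\<forall>D. C \<subseteq> D \<and> D \<subseteq> S' \<and> cn_connected \<F> D \<longrightarrow> D = C)}"

definition necklace :: "'a set set \<Rightarrow> 'a set \<Rightarrow> bool" where
  "necklace \<F> N \<longleftrightarrow> cn_connected \<F> N \<and>
     (\<exists>H :: nat \<Rightarrow> 'a set. (\<forall>n. finite (H n) \<and> cn_connected \<F> (H n)) \<and>
        N = (\<Union>n. H n) \<and>
        (\<forall>i j. H i \<inter> H j \<noteq> {} \<longleftrightarrow> (i \<le> j + 1 \<and> j \<le> i + 1)))"

definition necklace_tail :: "'a set set \<Rightarrow> 'a set \<Rightarrow> 'a set \<Rightarrow> 'a set" where
  "necklace_tail \<F> N X = (THE T. T \<in> cn_components \<F> (N - X) \<and> finite (N - T))"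

definition necklace_equiv :: "'a set \<Rightarrow> 'a set set \<Rightarrow> 'a set \<Rightarrow> 'a set \<Rightarrow> bool" where
  "necklace_equiv S \<F> N N' \<longleftrightarrow>
     (\<forall>X. finite X \<and> X \<subseteq> S \<longrightarrow>
        (\<exists>D\<in>cn_components \<F> (S - X).
           necklace_tail \<F> N X \<subseteq> D \<and> necklace_tail \<F> N' X \<subseteq> D))"

end

theory Submission
  imports Defs
begin

text \<open>If N and N' are equivalent, then for every finite X some F \<in> \<F> avoiding X joins
  the X-tails of N and N' (both lie in one component of S - X); choosing such sets
  recursively, each avoiding all previously chosen ones, yields the disjoint family.
  Conversely, given infinitely many disjoint connectors, all but finitely many of them
  avoid the finite set formed by X and the finitely many elements of N, N' outside their
  X-tails; such a connector glues the two tails into one connected subset of S - X.\<close>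

definition overlap_union_closed :: "'a set set \<Rightarrow> bool" where
  "overlap_union_closed \<F> \<longleftrightarrow> (\<forall>F\<in>\<F>. \<forall>F'\<in>\<F>. F \<inter> F' \<noteq> {} \<longrightarrow> F \<union> F' \<in> \<F>)"

lemma connectoid_overlap_union_closed: "connectoid S \<F> \<Longrightarrow> overlap_union_closed \<F>"
  unfolding connectoid_def overlap_union_closed_def by blast

lemma cn_connected_subset_carrier:
  assumes "connectoid S \<F>" "cn_connected \<F> C"
  shows "C \<subseteq> S"
proof
  fix x assume "x \<in> C"
  then obtain F where "F \<in> \<F>" "x \<in> F" using assms(2) unfolding cn_connected_def by blast
  then show "x \<in> S" using assms(1) unfolding connectoid_def by blast
qed

lemma cn_connected_member: "F \<in> \<F> \<Longrightarrow> cn_connected \<F> F"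
  unfolding cn_connected_def by blast

lemma cn_connected_Union_common_point:
  assumes "overlap_union_closed \<F>"
    and "\<And>C. C \<in> A \<Longrightarrow> cn_connected \<F> C \<and> p \<in> C"
  shows "cn_connected \<F> (\<Union>A)"
  unfolding cn_connected_def
proof (intro ballI)
  fix x y assume "x \<in> \<Union>A" "y \<in> \<Union>A"
  then obtain C1 C2 where C: "C1 \<in> A" "x \<in> C1" "C2 \<in> A" "y \<in> C2" by blast
  obtain F1 where F1: "F1 \<in> \<F>" "F1 \<subseteq> C1" "x \<in> F1" "p \<in> F1"
    using assms(2)[OF C(1)] C(2) unfolding cn_connected_def by blast
  obtain F2 where F2: "F2 \<in> \<F>" "F2 \<subseteq> C2" "p \<in> F2" "y \<in> F2"
    using assms(2)[OF C(3)] C(4) unfolding cn_connected_def by blast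
  have "F1 \<union> F2 \<in> \<F>"
    using assms(1) F1(1,4) F2(1,3) unfolding overlap_union_closed_def by blast
  moreover have "F1 \<union> F2 \<subseteq> \<Union>A" using F1(2) F2(2) C(1,3) by blast
  ultimately show "\<exists>F\<in>\<F>. F \<subseteq> \<Union>A \<and> x \<in> F \<and> y \<in> F" using F1(3) F2(4) by blast
qed

lemma cn_connected_Un:
  assumes "overlap_union_closed \<F>" "cn_connected \<F> C1" "cn_connected \<F> C2" "C1 \<inter> C2 \<noteq> {}"
  shows "cn_connected \<F> (C1 \<union> C2)"
proof -
  obtain p where p: "p \<in> C1" "p \<in> C2" using assms(4) by blast
  have "cn_connected \<F> (\<Union>{C1, C2})"
    by (rule cn_connected_Union_common_point[OF assms(1)]) (use assms(2,3) p in blast)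
  then show ?thesis by simp
qed

lemma cn_componentsD:
  assumes "K \<in> cn_components \<F> Y"
  shows "K \<subseteq> Y" "cn_connected \<F> K"
    and "\<And>D. K \<subseteq> D \<Longrightarrow> D \<subseteq> Y \<Longrightarrow> cn_connected \<F> D \<Longrightarrow> D = K"
  using assms unfolding cn_components_def by blast+

lemma cn_connected_subset_component:
  assumes "overlap_union_closed \<F>" "C \<noteq> {}" "C \<subseteq> Y" "cn_connected \<F> C"
  obtains K where "K \<in> cn_components \<F> Y" "C \<subseteq> K"
proof -
  obtain p where p: "p \<in> C" using assms(2) by blast
  define K where "K = \<Union>{D. D \<subseteq> Y \<and> cn_connected \<F> D \<and> p \<in> D}"
  have "cn_connected \<F> K"
    unfolding K_def by (rule cn_connected_Union_common_point[OF assms(1)]) blast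
  moreover have "K \<subseteq> Y" "C \<subseteq> K" unfolding K_def using assms(3,4) p by blast+
  moreover have "D = K" if "K \<subseteq> D" "D \<subseteq> Y" "cn_connected \<F> D" for D
  proof -
    have "p \<in> D" using that(1) \<open>C \<subseteq> K\<close> p by blast
    then have "D \<subseteq> K" using that(2,3) unfolding K_def by blast
    then show ?thesis using that(1) by (rule subset_antisym)
  qed
  ultimately have "K \<in> cn_components \<F> Y" unfolding cn_components_def by blast
  then show thesis using that \<open>C \<subseteq> K\<close> by blast
qed

lemma cn_components_eq_if_meet:
  assumes "overlap_union_closed \<F>" "K1 \<in> cn_components \<F> Y" "K2 \<in> cn_components \<F> Y"
    and "K1 \<inter> K2 \<noteq> {}"
  shows "K1 = K2"
proof -
  have conn: "cn_connected \<F> (K1 \<union> K2)"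
    using cn_connected_Un[OF assms(1) cn_componentsD(2)[OF assms(2)]
        cn_componentsD(2)[OF assms(3)] assms(4)] .
  have sub: "K1 \<union> K2 \<subseteq> Y" using cn_componentsD(1) assms(2,3) by blast
  have "K1 \<union> K2 = K1" using cn_componentsD(3)[OF assms(2) _ sub conn] by blast
  moreover have "K1 \<union> K2 = K2" using cn_componentsD(3)[OF assms(3) _ sub conn] by blast
  ultimately show ?thesis by blast
qed

definition linked_chain :: "(nat \<Rightarrow> 'a set) \<Rightarrow> bool" where
  "linked_chain H \<longleftrightarrow> (\<forall>i j. H i \<inter> H j \<noteq> {} \<longleftrightarrow> (i \<le> j + 1 \<and> j \<le> i + 1))"

lemma linked_chain_meets:
  "linked_chain H \<Longrightarrow> i \<le> j + 1 \<Longrightarrow> j \<le> i + 1 \<Longrightarrow> H i \<inter> H j \<noteq> {}"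
  unfolding linked_chain_def by blast

lemma linked_chain_meetsD: "linked_chain H \<Longrightarrow> H i \<inter> H j \<noteq> {} \<Longrightarrow> i \<le> j + 1 \<and> j \<le> i + 1"
  unfolding linked_chain_def by blast

lemma linked_chain_nonempty: "linked_chain H \<Longrightarrow> H n \<noteq> {}"
  using linked_chain_meets[of H n n] by auto

lemma linked_chain_finite_occurrences:
  assumes "linked_chain H"
  shows "finite {n. x \<in> H n}"
proof (cases "\<exists>i. x \<in> H i")
  case True
  then obtain i where "x \<in> H i" by blast
  have "n \<le> i + 1" if "x \<in> H n" for n
    using linked_chain_meetsD[OF assms, of n i] \<open>x \<in> H i\<close> that by blast
  then have "{n. x \<in> H n} \<subseteq> {..i + 1}" by blast
  then show ?thesis by (rule finite_subset) simp
qed simp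

lemma linked_chain_eventually_avoids:
  assumes "linked_chain H" "finite X"
  obtains m where "\<And>n. m \<le> n \<Longrightarrow> H n \<inter> X = {}"
proof -
  have "finite (\<Union>x\<in>X. {n. x \<in> H n})"
    using assms(2) by (simp add: linked_chain_finite_occurrences[OF assms(1)])
  then obtain m where m: "\<forall>n\<in>(\<Union>x\<in>X. {n. x \<in> H n}). n < m"
    using finite_nat_set_iff_bounded by blast
  have "H n \<inter> X = {}" if "m \<le> n" for n
  proof -
    have "x \<notin> H n" if "x \<in> X" for x
      using m \<open>m \<le> n\<close> that by (metis UN_I leD mem_Collect_eq)
    then show ?thesis by blast
  qed
  then show thesis using that by blast
qed

lemma linked_chain_Union_infinite:
  assumes "linked_chain H"
  shows "infinite (\<Union>n. H n)"
proof
  assume fin: "finite (\<Union>n. H n)"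
  define f where "f n = (SOME x. x \<in> H (2 * n))" for n
  have f: "f n \<in> H (2 * n)" for n
    using linked_chain_nonempty[OF assms] unfolding f_def by (simp add: some_in_eq)
  \<comment> \<open>the even-indexed beads are pairwise disjoint\<close>
  have "inj f"
  proof (rule injI)
    fix i j assume "f i = f j"
    then have "H (2 * i) \<inter> H (2 * j) \<noteq> {}" using f by (metis disjoint_iff)
    then show "i = j" using linked_chain_meetsD[OF assms, of "2 * i" "2 * j"] by linarith
  qed
  moreover have "range f \<subseteq> (\<Union>n. H n)" using f by blast
  ultimately show False
    using fin by (meson finite_imageD finite_subset infinite_UNIV_nat)
qed

lemma linked_chain_tail_connected:
  assumes "overlap_union_closed \<F>" "linked_chain H" "\<And>n. cn_connected \<F> (H n)"
  shows "cn_connected \<F> (\<Union>n\<in>{m..}. H n)"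
proof -
  define A where "A k = (\<Union>n\<in>{m..m + k}. H n)" for k
  obtain p where p: "p \<in> H m" using linked_chain_nonempty[OF assms(2)] by blast
  have "cn_connected \<F> (A k)" for k
  proof (induction k)
    case 0
    show ?case using assms(3) by (simp add: A_def)
  next
    case (Suc k)
    have "A (Suc k) = A k \<union> H (m + Suc k)"
      by (auto simp: A_def atLeastAtMostSuc_conv)
    moreover have "H (m + k) \<subseteq> A k" unfolding A_def by (rule UN_upper) simp
    then have "A k \<inter> H (m + Suc k) \<noteq> {}"
      using linked_chain_meets[OF assms(2), of "m + k" "m + Suc k"] by auto
    ultimately show ?case using cn_connected_Un[OF assms(1) Suc.IH assms(3)] by simp
  qed
  moreover have "p \<in> A k" for k using p by (auto simp: A_def)
  ultimately have "cn_connected \<F> (\<Union>(range A))"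
    by (intro cn_connected_Union_common_point[OF assms(1), of _ p]) blast
  moreover have "H n \<subseteq> A (n - m)" if "m \<le> n" for n
    using that unfolding A_def by (intro UN_upper) simp
  then have "(\<Union>n\<in>{m..}. H n) \<subseteq> \<Union>(range A)" by fastforce
  moreover have "\<Union>(range A) \<subseteq> (\<Union>n\<in>{m..}. H n)" unfolding A_def by auto
  ultimately show ?thesis by (metis subset_antisym)
qed

lemma necklaceE:
  assumes "necklace \<F> N"
  obtains H where "\<And>n. finite (H n)" "\<And>n. cn_connected \<F> (H n)"
    and "N = (\<Union>n. H n)" "linked_chain H"
proof -
  obtain H :: "nat \<Rightarrow> _" where "\<forall>n. finite (H n) \<and> cn_connected \<F> (H n)"
    "N = (\<Union>n. H n)" "\<forall>i j. H i \<inter> H j \<noteq> {} \<longleftrightarrow> (i \<le> j + 1 \<and> j \<le> i + 1)"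
    using assms unfolding necklace_def by blast
  then show thesis by (intro that) (simp_all add: linked_chain_def)
qed

lemma necklace_infinite:
  assumes "necklace \<F> N"
  shows "infinite N"
proof -
  obtain H where "N = (\<Union>n. H n)" "linked_chain H" using necklaceE[OF assms] by blast
  then show ?thesis by (simp add: linked_chain_Union_infinite)
qed

lemma necklace_cofinite_component:
  assumes "overlap_union_closed \<F>" "necklace \<F> N" "finite X"
  obtains K where "K \<in> cn_components \<F> (N - X)" "finite (N - K)"
proof -
  obtain H where H_fin: "\<And>n. finite (H n)" and H_conn: "\<And>n. cn_connected \<F> (H n)"
    and N: "N = (\<Union>n. H n)" and H: "linked_chain H"
    using necklaceE[OF assms(2)] by blast
  obtain m where m: "\<And>n. m \<le> n \<Longrightarrow> H n \<inter> X = {}"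
    using linked_chain_eventually_avoids[OF H assms(3)] by blast
  define U where "U = (\<Union>n\<in>{m..}. H n)"
  have "U \<noteq> {}" using linked_chain_nonempty[OF H, of m] by (auto simp: U_def)
  moreover have "U \<subseteq> N - X" using m by (auto simp: U_def N)
  moreover have "cn_connected \<F> U"
    unfolding U_def using linked_chain_tail_connected[OF assms(1) H H_conn] .
  ultimately obtain K where K: "K \<in> cn_components \<F> (N - X)" "U \<subseteq> K"
    using cn_connected_subset_component[OF assms(1)] by blast
  have "x \<in> (\<Union>n<m. H n)" if x: "x \<in> N" "x \<notin> K" for x
  proof -
    obtain n where "x \<in> H n" using x(1) N by blast
    moreover have "\<not> m \<le> n" using K(2) x(2) \<open>x \<in> H n\<close> unfolding U_def by blast
    ultimately show ?thesis by auto
  qed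
  moreover have "finite (\<Union>n<m. H n)" using H_fin by simp
  ultimately have "finite (N - K)" by (meson DiffE finite_subset subsetI)
  then show thesis using that K(1) by blast
qed

lemma necklace_tail:
  assumes "overlap_union_closed \<F>" "necklace \<F> N" "finite X"
  shows "necklace_tail \<F> N X \<in> cn_components \<F> (N - X)"
    and "finite (N - necklace_tail \<F> N X)"
proof -
  let ?P = "\<lambda>T. T \<in> cn_components \<F> (N - X) \<and> finite (N - T)"
  obtain K where K: "?P K" using necklace_cofinite_component[OF assms] by blast
  \<comment> \<open>two cofinite subsets of the infinite set N meet, so cofinite components coincide\<close>
  have "T = K" if "?P T" for T
  proof (rule cn_components_eq_if_meet[OF assms(1)])
    show "T \<inter> K \<noteq> {}"
    proof
      assume "T \<inter> K = {}"
      then have "N \<subseteq> (N - T) \<union> (N - K)" by blast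
      moreover have "finite ((N - T) \<union> (N - K))" using \<open>?P T\<close> K by blast
      ultimately show False using necklace_infinite[OF assms(2)] by (metis finite_subset)
    qed
    show "T \<in> cn_components \<F> (N - X)" "K \<in> cn_components \<F> (N - X)"
      using \<open>?P T\<close> K by blast+
  qed
  then have "\<exists>!T. ?P T" using K by blast
  then have "?P (necklace_tail \<F> N X)" unfolding necklace_tail_def by (rule theI')
  then show "necklace_tail \<F> N X \<in> cn_components \<F> (N - X)"
    and "finite (N - necklace_tail \<F> N X)" by blast+
qed

lemma necklace_tail_nonempty:
  assumes "overlap_union_closed \<F>" "necklace \<F> N" "finite X"
  shows "necklace_tail \<F> N X \<noteq> {}"
  using necklace_tail(2)[OF assms] necklace_infinite[OF assms(2)] by auto

lemma disjoint_sequence_if_avoidable: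
  assumes "\<And>X. finite X \<Longrightarrow> X \<subseteq> S \<Longrightarrow> \<exists>F. P F \<and> finite F \<and> F \<subseteq> S \<and> F \<inter> X = {}"
  shows "\<exists>C :: nat \<Rightarrow> 'a set. (\<forall>n. P (C n)) \<and> (\<forall>i j. i \<noteq> j \<longrightarrow> C i \<inter> C j = {})"
proof -
  define Q where "Q X F \<longleftrightarrow> P F \<and> finite F \<and> F \<subseteq> S \<and> F \<inter> X = {}" for X F
  define G where "G X = (SOME F. Q X F)" for X
  have G: "Q X (G X)" if "finite X" "X \<subseteq> S" for X
    unfolding G_def using someI_ex[OF assms[OF that, folded Q_def]] .
  define Y where "Y = rec_nat {} (\<lambda>_ Y. Y \<union> G Y)"
  have Y_Suc: "Y (Suc n) = Y n \<union> G (Y n)" for n by (simp add: Y_def)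
  have Y: "finite (Y n) \<and> Y n \<subseteq> S" for n
  proof (induction n)
    case 0
    show ?case by (simp add: Y_def)
  next
    case (Suc n)
    then show ?case using G[of "Y n"] by (simp add: Y_Suc Q_def)
  qed
  have GY: "Q (Y n) (G (Y n))" for n using G Y by blast
  have "G (Y i) \<subseteq> Y j" if "i < j" for i j
  proof -
    have "Y (Suc i) \<subseteq> Y (Suc i + k)" for k by (induction k) (auto simp: Y_Suc)
    from this[of "j - Suc i"] show ?thesis using that by (simp add: Y_Suc)
  qed
  then have disj: "G (Y i) \<inter> G (Y j) = {}" if "i < j" for i j
    using GY[of j] that unfolding Q_def by blast
  show ?thesis
  proof (intro exI[of _ "\<lambda>n. G (Y n)"] conjI allI impI)
    show "P (G (Y n))" for n using GY unfolding Q_def by blast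
    show "G (Y i) \<inter> G (Y j) = {}" if "i \<noteq> j" for i j
      using that disj[of i j] disj[of j i] by (cases "i < j") auto
  qed
qed

lemma disjoint_sequence_avoids_finite:
  fixes C :: "nat \<Rightarrow> 'a set"
  assumes "\<And>i j. i \<noteq> j \<Longrightarrow> C i \<inter> C j = {}" "finite Z"
  shows "\<exists>n. C n \<inter> Z = {}"
proof -
  have "finite {n. z \<in> C n}" for z
  proof (cases "\<exists>n. z \<in> C n")
    case True
    then obtain n where "z \<in> C n" by blast
    then have "{n. z \<in> C n} \<subseteq> {n}" using assms(1) by blast
    then show ?thesis by (rule finite_subset) simp
  qed simp
  then have "finite (\<Union>z\<in>Z. {n. z \<in> C n})" using assms(2) by simp
  moreover have "{n. C n \<inter> Z \<noteq> {}} \<subseteq> (\<Union>z\<in>Z. {n. z \<in> C n})" by blast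
  ultimately have "finite {n. C n \<inter> Z \<noteq> {}}" by (rule finite_subset[rotated])
  from ex_new_if_finite[OF infinite_UNIV_nat this]
  obtain n where "n \<notin> {n. C n \<inter> Z \<noteq> {}}" ..
  then show ?thesis by blast
qed

lemma necklace_equiv_imp_disjoint_connectors:
  assumes S: "connectoid S \<F>" and N: "necklace \<F> N" and N': "necklace \<F> N'"
    and equiv: "necklace_equiv S \<F> N N'"
  shows "\<exists>C :: nat \<Rightarrow> 'a set.
    (\<forall>n. finite (C n) \<and> cn_connected \<F> (C n) \<and> C n \<inter> N \<noteq> {} \<and> C n \<inter> N' \<noteq> {}) \<and>
    (\<forall>i j. i \<noteq> j \<longrightarrow> C i \<inter> C j = {})"
proof -
  have uc: "overlap_union_closed \<F>" using connectoid_overlap_union_closed[OF S] .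
  have avoid: "\<exists>F. (finite F \<and> cn_connected \<F> F \<and> F \<inter> N \<noteq> {} \<and> F \<inter> N' \<noteq> {})
      \<and> finite F \<and> F \<subseteq> S \<and> F \<inter> X = {}" if X: "finite X" "X \<subseteq> S" for X
  proof -
    obtain D where D: "D \<in> cn_components \<F> (S - X)"
      "necklace_tail \<F> N X \<subseteq> D" "necklace_tail \<F> N' X \<subseteq> D"
      using equiv X unfolding necklace_equiv_def by blast
    obtain x y where x: "x \<in> necklace_tail \<F> N X" and y: "y \<in> necklace_tail \<F> N' X"
      using necklace_tail_nonempty[OF uc N X(1)] necklace_tail_nonempty[OF uc N' X(1)] by blast
    have "x \<in> N" "y \<in> N'"
      using x y cn_componentsD(1)[OF necklace_tail(1)[OF uc N X(1)]]
        cn_componentsD(1)[OF necklace_tail(1)[OF uc N' X(1)]] by blast+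
    moreover obtain F where F: "F \<in> \<F>" "F \<subseteq> D" "x \<in> F" "y \<in> F"
      using cn_componentsD(2)[OF D(1)] x y D(2,3) unfolding cn_connected_def by blast
    moreover have "finite F" "F \<subseteq> S" using F(1) S unfolding connectoid_def by blast+
    moreover have "F \<inter> X = {}" using F(2) cn_componentsD(1)[OF D(1)] by blast
    ultimately show ?thesis using cn_connected_member[OF F(1)] by (intro exI[of _ F]) blast
  qed
  then show ?thesis by (rule disjoint_sequence_if_avoidable)
qed

lemma necklace_equiv_if_disjoint_connectors:
  fixes C :: "nat \<Rightarrow> 'a set"
  assumes S: "connectoid S \<F>" and N: "necklace \<F> N" and N': "necklace \<F> N'"
    and C: "\<And>n. cn_connected \<F> (C n) \<and> C n \<inter> N \<noteq> {} \<and> C n \<inter> N' \<noteq> {}"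
    and disj: "\<And>i j. i \<noteq> j \<Longrightarrow> C i \<inter> C j = {}"
  shows "necklace_equiv S \<F> N N'"
  unfolding necklace_equiv_def
proof (intro allI impI)
  have uc: "overlap_union_closed \<F>" using connectoid_overlap_union_closed[OF S] .
  fix X assume X: "finite X \<and> X \<subseteq> S"
  define T where "T = necklace_tail \<F> N X"
  define T' where "T' = necklace_tail \<F> N' X"
  have T: "T \<in> cn_components \<F> (N - X)" "finite (N - T)"
    using necklace_tail[OF uc N] X unfolding T_def by blast+
  have T': "T' \<in> cn_components \<F> (N' - X)" "finite (N' - T')"
    using necklace_tail[OF uc N'] X unfolding T'_def by blast+
  have "finite (X \<union> (N - T) \<union> (N' - T'))" using X T(2) T'(2) by simp
  with disj have "\<exists>n. C n \<inter> (X \<union> (N - T) \<union> (N' - T')) = {}"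
    by (rule disjoint_sequence_avoids_finite)
  then obtain n where n: "C n \<inter> (X \<union> (N - T) \<union> (N' - T')) = {}" ..
  \<comment> \<open>C n meets N and N' only inside their X-tails\<close>
  have "T \<inter> C n \<noteq> {}" "C n \<inter> T' \<noteq> {}" using C[of n] n by blast+
  then have "cn_connected \<F> (T \<union> C n)" "(T \<union> C n) \<inter> T' \<noteq> {}"
    using cn_connected_Un[OF uc cn_componentsD(2)[OF T(1)]] C[of n] by blast+
  then have conn: "cn_connected \<F> (T \<union> C n \<union> T')"
    using cn_connected_Un[OF uc _ cn_componentsD(2)[OF T'(1)]] by blast
  have "N \<subseteq> S" "N' \<subseteq> S" "C n \<subseteq> S"
    using cn_connected_subset_carrier[OF S] conjunct1[OF N[unfolded necklace_def]]
      conjunct1[OF N'[unfolded necklace_def]] conjunct1[OF C[of n]] by blast+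
  then have "T \<union> C n \<union> T' \<subseteq> S - X"
    using cn_componentsD(1)[OF T(1)] cn_componentsD(1)[OF T'(1)] n by blast
  then obtain D where "D \<in> cn_components \<F> (S - X)" "T \<union> C n \<union> T' \<subseteq> D"
    using cn_connected_subset_component[OF uc _ _ conn] \<open>T \<inter> C n \<noteq> {}\<close> by blast
  then show "\<exists>D\<in>cn_components \<F> (S - X). T \<subseteq> D \<and> T' \<subseteq> D" by blast
qed

theorem proposition2p1:
  fixes S :: "'a set" and \<F> :: "'a set set" and N N' :: "'a set"
  assumes "connectoid S \<F>"
    and "necklace \<F> N" and "necklace \<F> N'"
  shows "necklace_equiv S \<F> N N' \<longleftrightarrow>
    (\<exists>C :: nat \<Rightarrow> 'a set.
       (\<forall>n. finite (C n) \<and> cn_connected \<F> (C n) \<and> C n \<inter> N \<noteq> {} \<and> C n \<inter> N' \<noteq> {}) \<and>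
       (\<forall>i j. i \<noteq> j \<longrightarrow> C i \<inter> C j = {}))"
  using necklace_equiv_imp_disjoint_connectors[OF assms]
    necklace_equiv_if_disjoint_connectors[OF assms] by blast

end
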